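(* If $\otimes$ is the drastic minimum $T_d$ and $\oplus$ is a disjunctive uninorm, then $(\otimes,\oplus)$ satisfies the rearrangement inequality. If $\oplus$ is the drastic maximum $T_d'$ and $\otimes$ is a conjunctive uninorm, then $(\otimes,\oplus)$ satisfies the dual rearrangement inequality.
   Context: A uninorm is a function $\otimes:[0,1]^2\to[0,1]$ that is commutative, associative, monotonic ($x\leq y$ implies $x\otimes z\leq y\otimes z$), and has an identity element $e\in[0,1]$. A uninorm is conjunctive if $0\otimes 1=0$ and disjunctive if $0\otimes1=1$. The drastic minimum is $T_d(x,y)=\min(x,y)$ if $\max(x,y)=1$ and $0$ otherwise; the drastic maximum is $T_d'(x,y)=\max(x,y)$ if $\min(x,y)=0$ and $1$ otherwise. $(\otimes,\oplus)$ satisfies the rearrangement inequality if for every $n\geq1$, all $0\leq x_1\leq\cdots\leq x_n\leq 1$, $0\leq y_1\leq\cdots\leq y_n\leq 1$ and every permutation $\sigma$ of $\{1,\dots,n\}$, $$(x_n\otimes y_1)\oplus\cdots\oplus(x_1\otimes y_n)\leq (x_{\sigma(1)}\otimes y_1)\oplus\cdots\oplus(x_{\sigma(n)}\otimes y_n)\leq (x_1\otimes y_1)\oplus\cdots\oplus(x_n\otimes y_n),$$ and the dual rearrangement inequality if for all such data $$(x_n\oplus y_1)\otimes\cdots\otimes(x_1\oplus y_n)\geq (x_{\sigma(1)}\oplus y_1)\otimes\cdots\otimes(x_{\sigma(n)}\oplus y_n)\geq (x_1\oplus y_1)\otimes\cdots\otimes(x_n\oplus y_n).$$ *)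

theory Defs
  imports Complex_Main "HOL-Combinatorics.Permutations"
begin

definition uninorm :: "(real \<Rightarrow> real \<Rightarrow> real) \<Rightarrow> bool" where
  "uninorm U \<longleftrightarrow>
     (\<forall>x\<in>{0..1}. \<forall>y\<in>{0..1}. U x y \<in> {0..1}) \<and>
     (\<forall>x\<in>{0..1}. \<forall>y\<in>{0..1}. U x y = U y x) \<and>
     (\<forall>x\<in>{0..1}. \<forall>y\<in>{0..1}. \<forall>z\<in>{0..1}. U (U x y) z = U x (U y z)) \<and>
     (\<forall>x\<in>{0..1}. \<forall>y\<in>{0..1}. \<forall>z\<in>{0..1}. x \<le> y \<longrightarrow> U x z \<le> U y z) \<and>
     (\<exists>e\<in>{0..1}. \<forall>x\<in>{0..1}. U e x = x)"

definition conjunctive_uninorm :: "(real \<Rightarrow> real \<Rightarrow> real) \<Rightarrow> bool" where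
  "conjunctive_uninorm U \<longleftrightarrow> uninorm U \<and> U 0 1 = 0"

definition disjunctive_uninorm :: "(real \<Rightarrow> real \<Rightarrow> real) \<Rightarrow> bool" where
  "disjunctive_uninorm U \<longleftrightarrow> uninorm U \<and> U 0 1 = 1"

definition drastic_min :: "real \<Rightarrow> real \<Rightarrow> real" where
  "drastic_min x y = (if max x y = 1 then min x y else 0)"

definition drastic_max :: "real \<Rightarrow> real \<Rightarrow> real" where
  "drastic_max x y = (if min x y = 0 then max x y else 1)"

fun iter :: "(real \<Rightarrow> real \<Rightarrow> real) \<Rightarrow> (nat \<Rightarrow> real) \<Rightarrow> nat \<Rightarrow> real" where
  "iter F g 0 = g 0"
| "iter F g (Suc 0) = g 1"
| "iter F g (Suc (Suc n)) = F (iter F g (Suc n)) (g (Suc (Suc n)))"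

definition rearrangement_ineq ::
  "(real \<Rightarrow> real \<Rightarrow> real) \<Rightarrow> (real \<Rightarrow> real \<Rightarrow> real) \<Rightarrow> bool" where
  "rearrangement_ineq T S \<longleftrightarrow>
    (\<forall>n::nat. \<forall>x y :: nat \<Rightarrow> real. \<forall>\<sigma>.
       n \<ge> 1 \<longrightarrow>
       (\<forall>i\<in>{1..n}. 0 \<le> x i \<and> x i \<le> 1 \<and> 0 \<le> y i \<and> y i \<le> 1) \<longrightarrow>
       (\<forall>i j. 1 \<le> i \<longrightarrow> i \<le> j \<longrightarrow> j \<le> n \<longrightarrow> x i \<le> x j \<and> y i \<le> y j) \<longrightarrow>
       \<sigma> permutes {1..n} \<longrightarrow>
       iter S (\<lambda>i. T (x (n + 1 - i)) (y i)) n \<le> iter S (\<lambda>i. T (x (\<sigma> i)) (y i)) n \<and>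
       iter S (\<lambda>i. T (x (\<sigma> i)) (y i)) n \<le> iter S (\<lambda>i. T (x i) (y i)) n)"

definition dual_rearrangement_ineq ::
  "(real \<Rightarrow> real \<Rightarrow> real) \<Rightarrow> (real \<Rightarrow> real \<Rightarrow> real) \<Rightarrow> bool" where
  "dual_rearrangement_ineq T S \<longleftrightarrow>
    (\<forall>n::nat. \<forall>x y :: nat \<Rightarrow> real. \<forall>\<sigma>.
       n \<ge> 1 \<longrightarrow>
       (\<forall>i\<in>{1..n}. 0 \<le> x i \<and> x i \<le> 1 \<and> 0 \<le> y i \<and> y i \<le> 1) \<longrightarrow>
       (\<forall>i j. 1 \<le> i \<longrightarrow> i \<le> j \<longrightarrow> j \<le> n \<longrightarrow> x i \<le> x j \<and> y i \<le> y j) \<longrightarrow>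
       \<sigma> permutes {1..n} \<longrightarrow>
       iter T (\<lambda>i. S (x (n + 1 - i)) (y i)) n \<ge> iter T (\<lambda>i. S (x (\<sigma> i)) (y i)) n \<and>
       iter T (\<lambda>i. S (x (\<sigma> i)) (y i)) n \<ge> iter T (\<lambda>i. S (x i) (y i)) n)"

end

theory Submission
  imports Defs "HOL-Library.Multiset"
begin

text \<open>With the drastic minimum every term \<open>x \<otimes> y\<close> vanishes unless one factor is \<open>1\<close>. So the
  multiset of terms of a pairing either contains \<open>1\<close>, which absorbs the whole disjunctive uninorm
  sum, or consists of the \<open>x\<close>-values paired with \<open>y = 1\<close>, the \<open>y\<close>-values paired with \<open>x = 1\<close>,
  and a fixed number of zeros. A uninorm sum depends only on the multiset of its terms and is
  monotone, so it suffices to compare these sub-multisets: the identity pairing takes them at the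
  top of the (monotone) sequences, the reversal at the bottom. The dual inequality follows by
  applying this to the dual uninorm \<open>1 - U (1 - a) (1 - b)\<close>, which is disjunctive when \<open>U\<close> is
  conjunctive and turns the drastic maximum into the drastic minimum, and to the reversed
  complemented sequences.\<close>

lemma uninorm_closed: "uninorm U \<Longrightarrow> a \<in> {0..1} \<Longrightarrow> b \<in> {0..1} \<Longrightarrow> U a b \<in> {0..1}"
  unfolding uninorm_def by blast

lemma uninorm_commute: "uninorm U \<Longrightarrow> a \<in> {0..1} \<Longrightarrow> b \<in> {0..1} \<Longrightarrow> U a b = U b a"
  unfolding uninorm_def by blast

lemma uninorm_assoc:
  "uninorm U \<Longrightarrow> a \<in> {0..1} \<Longrightarrow> b \<in> {0..1} \<Longrightarrow> c \<in> {0..1} \<Longrightarrow> U (U a b) c = U a (U b c)"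
  unfolding uninorm_def by blast

lemma uninorm_mono:
  assumes "uninorm U" "a \<in> {0..1}" "b \<in> {0..1}" "c \<in> {0..1}" "d \<in> {0..1}" "a \<le> b" "c \<le> d"
  shows "U a c \<le> U b d"
proof -
  have "U a c \<le> U b c"
    using assms unfolding uninorm_def by blast
  also have "\<dots> = U c b"
    using assms by (simp add: uninorm_commute)
  also have "\<dots> \<le> U d b"
    using assms unfolding uninorm_def by blast
  also have "\<dots> = U b d"
    using assms by (simp add: uninorm_commute)
  finally show ?thesis .
qed

lemma disjunctive_uninorm_absorbs_one:
  assumes "disjunctive_uninorm U" "a \<in> {0..1}"
  shows "U a 1 = 1"
proof -
  have U: "uninorm U" "U 0 1 = 1"
    using assms(1) by (simp_all add: disjunctive_uninorm_def)
  have "U 0 1 \<le> U a 1" "U a 1 \<in> {0..1}"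
    using uninorm_mono[OF U(1)] uninorm_closed[OF U(1)] assms(2) by auto
  then show ?thesis
    using U(2) by simp
qed

lemma iter_Suc: "n \<ge> 1 \<Longrightarrow> iter F f (Suc n) = F (iter F f n) (f (Suc n))"
  by (cases n) auto

lemma iter_cong: "n \<ge> 1 \<Longrightarrow> (\<And>i. i \<in> {1..n} \<Longrightarrow> f i = g i) \<Longrightarrow> iter F f n = iter F g n"
  by (induction F f n rule: iter.induct) auto

section \<open>Uninorm sums of multisets\<close>

definition clamp :: "real \<Rightarrow> real" where
  "clamp a = max 0 (min 1 a)"

text \<open>A uninorm is commutative and associative only on \<open>[0,1]\<close>; clamping the arguments
  extends it to a left-commutative operation on all reals, as \<open>fold_mset\<close> requires.\<close>

definition uninorm_fold :: "(real \<Rightarrow> real \<Rightarrow> real) \<Rightarrow> real \<Rightarrow> real multiset \<Rightarrow> real" where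
  "uninorm_fold U e = fold_mset (\<lambda>a b. U (clamp a) (clamp b)) e"

lemma clamp_id: "a \<in> {0..1} \<Longrightarrow> clamp a = a"
  by (auto simp: clamp_def)

lemma clamp_closed: "clamp a \<in> {0..1}"
  by (auto simp: clamp_def)

lemma comp_fun_commute_uninorm_clamp:
  assumes "uninorm U"
  shows "comp_fun_commute (\<lambda>a b. U (clamp a) (clamp b))"
proof
  fix a b
  have closed: "U (clamp p) (clamp q) \<in> {0..1}" for p q
    using uninorm_closed[OF assms] clamp_closed by blast
  have "U (clamp b) (U (clamp a) (clamp z)) = U (clamp a) (U (clamp b) (clamp z))" for z
    using uninorm_assoc[OF assms] uninorm_commute[OF assms] clamp_closed by metis
  then show "(\<lambda>z. U (clamp b) (clamp z)) \<circ> (\<lambda>z. U (clamp a) (clamp z))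
           = (\<lambda>z. U (clamp a) (clamp z)) \<circ> (\<lambda>z. U (clamp b) (clamp z))"
    using closed by (simp add: comp_def clamp_id)
qed

lemma uninorm_fold_empty [simp]: "uninorm_fold U e {#} = e"
  by (simp add: uninorm_fold_def)

lemma uninorm_fold_closed:
  assumes "uninorm U" "e \<in> {0..1}"
  shows "uninorm_fold U e M \<in> {0..1}"
  using assms uninorm_closed[OF assms(1) clamp_closed clamp_closed]
  by (cases M) (simp_all add: uninorm_fold_def
      comp_fun_commute.fold_mset_add_mset[OF comp_fun_commute_uninorm_clamp])

lemma uninorm_fold_add_mset:
  assumes "uninorm U" "e \<in> {0..1}" "a \<in> {0..1}"
  shows "uninorm_fold U e (add_mset a M) = U a (uninorm_fold U e M)"
  using uninorm_fold_closed[OF assms(1,2), of M] assms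
  by (simp add: uninorm_fold_def clamp_id
      comp_fun_commute.fold_mset_add_mset[OF comp_fun_commute_uninorm_clamp])

lemma uninorm_fold_mono:
  assumes "uninorm U" "e \<in> {0..1}"
  shows "rel_mset (\<le>) M N \<Longrightarrow> set_mset M \<subseteq> {0..1} \<Longrightarrow> set_mset N \<subseteq> {0..1}
    \<Longrightarrow> uninorm_fold U e M \<le> uninorm_fold U e N"
proof (induction M arbitrary: N)
  case empty
  then show ?case
    by simp
next
  case (add a M N')
  obtain b N where N': "N' = add_mset b N" and "a \<le> b" "rel_mset (\<le>) M N"
    using msed_rel_invL[OF add.prems(1)] by blast
  moreover have "uninorm_fold U e M \<le> uninorm_fold U e N"
    using add N' \<open>rel_mset (\<le>) M N\<close> by simp
  ultimately show ?case
    using add.prems uninorm_fold_closed[OF assms]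
    by (simp add: uninorm_fold_add_mset[OF assms] uninorm_mono[OF assms(1)])
qed

lemma uninorm_fold_absorbs_one:
  assumes "disjunctive_uninorm U" "e \<in> {0..1}" "1 \<in># M"
  shows "uninorm_fold U e M = 1"
proof -
  have U: "uninorm U"
    using assms(1) by (simp add: disjunctive_uninorm_def)
  obtain N where "M = add_mset 1 N"
    using assms(3) by (metis multi_member_split)
  moreover have "U 1 (uninorm_fold U e N) = 1"
    using uninorm_fold_closed[OF U assms(2)] uninorm_commute[OF U]
      disjunctive_uninorm_absorbs_one[OF assms(1)] by (metis atLeastAtMost_iff order_refl zero_le_one)
  ultimately show ?thesis
    using uninorm_fold_add_mset[OF U assms(2)] by simp
qed

lemma iter_eq_uninorm_fold:
  assumes U: "uninorm U" and e: "e \<in> {0..1}" "\<forall>a\<in>{0..1}. U e a = a"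
    and "n \<ge> 1" "f ` {1..n} \<subseteq> {0..1}"
  shows "iter U f n = uninorm_fold U e {#f i. i \<in># mset_set {1..n}#}"
  using assms(4,5)
proof (induction n rule: nat_induct_at_least)
  case base
  have "U (f 1) e = U e (f 1)"
    using base e uninorm_commute[OF U] by simp
  then show ?case
    using base e uninorm_fold_add_mset[OF U e(1), of "f 1" "{#}"] by simp
next
  case (Suc n)
  have f: "f (Suc n) \<in> {0..1}" "f ` {1..n} \<subseteq> {0..1}"
    using Suc.prems by (auto simp: image_subset_iff)
  have "iter U f (Suc n) = U (uninorm_fold U e {#f i. i \<in># mset_set {1..n}#}) (f (Suc n))"
    using Suc f by (simp add: iter_Suc)
  also have "\<dots> = U (f (Suc n)) (uninorm_fold U e {#f i. i \<in># mset_set {1..n}#})"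
    using f uninorm_commute[OF U] uninorm_fold_closed[OF U e(1)] by blast
  finally show ?case
    using f by (simp add: atLeastAtMostSuc_conv uninorm_fold_add_mset[OF U e(1)])
qed

lemma image_mset_mset_set_reindex:
  "inj_on \<sigma> A \<Longrightarrow> {#f (\<sigma> i). i \<in># mset_set A#} = {#f j. j \<in># mset_set (\<sigma> ` A)#}"
  by (simp add: image_mset_mset_set[symmetric] image_mset.compositionality comp_def)

lemma iter_permute:
  assumes U: "uninorm U" and "n \<ge> 1" "bij_betw \<pi> {1..n} {1..n}" "f ` {1..n} \<subseteq> {0..1}"
  shows "iter U (\<lambda>i. f (\<pi> i)) n = iter U f n"
proof -
  obtain e where e: "e \<in> {0..1}" "\<forall>a\<in>{0..1}. U e a = a"
    using U unfolding uninorm_def by blast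
  have "{#f (\<pi> i). i \<in># mset_set {1..n}#} = {#f i. i \<in># mset_set {1..n}#}"
    using assms(3) image_mset_mset_set_reindex[of \<pi> "{1..n}" f] by (simp add: bij_betw_def)
  moreover have "(\<lambda>i. f (\<pi> i)) ` {1..n} \<subseteq> {0..1}"
    using assms(4) bij_betw_imp_surj_on[OF assms(3)] by auto
  ultimately show ?thesis
    using assms(2,4) by (simp add: iter_eq_uninorm_fold[OF U e])
qed

lemma rel_mset_plus: "rel_mset R A B \<Longrightarrow> rel_mset R C D \<Longrightarrow> rel_mset R (A + C) (B + D)"
  by (induction rule: rel_mset_induct) (auto intro: rel_mset_Plus)

lemma rel_mset_all:
  "size M = size N \<Longrightarrow> (\<And>a b. a \<in># M \<Longrightarrow> b \<in># N \<Longrightarrow> R a b) \<Longrightarrow> rel_mset R M N"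
proof (induction M arbitrary: N)
  case empty
  then show ?case
    by (simp add: rel_mset_Zero)
next
  case (add a M)
  then obtain b N' where "N = add_mset b N'"
    by (metis size_eq_Suc_imp_eq_union size_add_mset)
  then show ?case
    using add by (auto intro!: rel_mset_Plus)
qed

text \<open>Match \<open>S \<inter> T\<close> with itself and the rest of \<open>S\<close> arbitrarily with the rest of \<open>T\<close>.\<close>

lemma rel_mset_image_mset_set:
  fixes f :: "'a \<Rightarrow> 'b::preorder"
  assumes "finite S" "finite T" "card S = card T"
    and "\<And>i j. i \<in> S - T \<Longrightarrow> j \<in> T - S \<Longrightarrow> f i \<le> f j"
  shows "rel_mset (\<le>) {#f i. i \<in># mset_set S#} {#f i. i \<in># mset_set T#}"
proof -
  have split: "mset_set A = mset_set (S \<inter> T) + mset_set (A - B)"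
    if "finite A" "A \<inter> B = S \<inter> T" for A B
  proof -
    have "A = (S \<inter> T) \<union> (A - B)"
      using that by blast
    moreover have "mset_set (S \<inter> T \<union> (A - B)) = mset_set (S \<inter> T) + mset_set (A - B)"
      by (rule mset_set_Union) (use that assms(1) in auto)
    ultimately show ?thesis
      by metis
  qed
  have "card (S - T) = card (T - S)"
    using assms(1-3) by (simp add: card_Diff_subset_Int Int_commute)
  then have "rel_mset (\<le>) {#f i. i \<in># mset_set (S - T)#} {#f i. i \<in># mset_set (T - S)#}"
    using assms by (intro rel_mset_all) auto
  then show ?thesis
    using split[OF assms(1), of T] split[OF assms(2), of S]
    by (auto intro: rel_mset_plus multiset.rel_refl_strong simp: Int_commute)
qed

lemma rel_mset_image_mset_set_upward_closed:
  fixes f :: "'a::linorder \<Rightarrow> 'b::preorder"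
  assumes "finite I" "S \<subseteq> I" "T \<subseteq> I" "card S = card T" "mono_on I f"
    and upward: "\<And>i j. i \<in> I \<Longrightarrow> j \<in> T \<Longrightarrow> j \<le> i \<Longrightarrow> i \<in> T"
  shows "rel_mset (\<le>) {#f i. i \<in># mset_set S#} {#f i. i \<in># mset_set T#}"
proof (rule rel_mset_image_mset_set)
  fix i j assume ij: "i \<in> S - T" "j \<in> T - S"
  then have "i \<in> I" "j \<in> I"
    using assms(2,3) by auto
  moreover have "i \<le> j"
    using ij upward[of i j] \<open>i \<in> I\<close> \<open>j \<in> I\<close> by (metis DiffE linorder_le_cases)
  ultimately show "f i \<le> f j"
    by (rule mono_onD[OF assms(5)])
qed (use assms finite_subset in auto)

lemma rel_mset_image_mset_set_downward_closed:
  fixes f :: "'a::linorder \<Rightarrow> 'b::preorder"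
  assumes "finite I" "S \<subseteq> I" "T \<subseteq> I" "card S = card T" "mono_on I f"
    and downward: "\<And>i j. i \<in> I \<Longrightarrow> j \<in> S \<Longrightarrow> i \<le> j \<Longrightarrow> i \<in> S"
  shows "rel_mset (\<le>) {#f i. i \<in># mset_set S#} {#f i. i \<in># mset_set T#}"
proof (rule rel_mset_image_mset_set)
  fix i j assume ij: "i \<in> S - T" "j \<in> T - S"
  then have "i \<in> I" "j \<in> I"
    using assms(2,3) by auto
  moreover have "i \<le> j"
    using ij downward[of j i] \<open>i \<in> I\<close> \<open>j \<in> I\<close> by (metis DiffE linorder_le_cases)
  ultimately show "f i \<le> f j"
    by (rule mono_onD[OF assms(5)])
qed (use assms finite_subset in auto)

lemma bij_betw_reverse: "bij_betw (\<lambda>i. n + 1 - i) {1..n} {1..n::nat}"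
  by (rule bij_betw_byWitness[where f' = "\<lambda>i. n + 1 - i"]) auto

lemma Collect_reverse_eq_image:
  "{i \<in> {1..n}. P (n + 1 - i)} = (\<lambda>i. n + 1 - i) ` {i \<in> {1..n::nat}. P i}"
proof (rule set_eqI)
  fix k
  show "k \<in> {i \<in> {1..n}. P (n + 1 - i)} \<longleftrightarrow> k \<in> (\<lambda>i. n + 1 - i) ` {i \<in> {1..n}. P i}"
  proof
    assume "k \<in> {i \<in> {1..n}. P (n + 1 - i)}"
    then show "k \<in> (\<lambda>i. n + 1 - i) ` {i \<in> {1..n}. P i}"
      by (intro image_eqI[of _ _ "n + 1 - k"]) auto
  qed auto
qed

lemma rel_mset_image_mset_set_reverse_upward_closed:
  fixes f :: "nat \<Rightarrow> 'b::preorder"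
  assumes "A \<subseteq> {1..n}" "T \<subseteq> {1..n}" "card T = card A" "mono_on {1..n} f"
    and upward: "\<And>i j. i \<in> {1..n} \<Longrightarrow> j \<in> A \<Longrightarrow> j \<le> i \<Longrightarrow> i \<in> A"
  shows "rel_mset (\<le>) {#f i. i \<in># mset_set ((\<lambda>i. n + 1 - i) ` A)#} {#f i. i \<in># mset_set T#}"
proof (rule rel_mset_image_mset_set_downward_closed[OF _ _ assms(2) _ assms(4)])
  show "card ((\<lambda>i. n + 1 - i) ` A) = card T"
    using assms(1,3) inj_on_subset[OF bij_betw_imp_inj_on[OF bij_betw_reverse]]
    by (simp add: card_image)
  fix k j assume k: "k \<in> {1..n}" and "j \<in> (\<lambda>i. n + 1 - i) ` A" "k \<le> j"
  then obtain a where a: "a \<in> A" "a \<le> n + 1 - k"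
    using assms(1) by auto
  have "n + 1 - k \<in> {1..n}"
    using k by auto
  then have "n + 1 - k \<in> A"
    using upward a by blast
  then show "k \<in> (\<lambda>i. n + 1 - i) ` A"
    using k by (intro image_eqI[of _ _ "n + 1 - k"]) auto
next
  show "(\<lambda>i. n + 1 - i) ` A \<subseteq> {1..n}"
    using image_mono[OF assms(1), of "\<lambda>i. n + 1 - i"] bij_betw_reverse by (simp add: bij_betw_def)
qed simp

lemma mono_on_eq_one_upward:
  fixes f :: "'a::order \<Rightarrow> real"
  assumes "mono_on I f" "f ` I \<subseteq> {0..1}" "i \<in> I" "j \<in> I" "i \<le> j" "f i = 1"
  shows "f j = 1"
  using mono_onD[OF assms(1,3,4,5)] assms(2,4,6) by force

lemma card_bij_betw_preimage: "bij_betw \<sigma> I I \<Longrightarrow> card {i \<in> I. P (\<sigma> i)} = card {i \<in> I. P i}"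
proof -
  assume "bij_betw \<sigma> I I"
  then have "\<sigma> ` {i \<in> I. P (\<sigma> i)} = {i \<in> I. P i}" "inj_on \<sigma> {i \<in> I. P (\<sigma> i)}"
    by (auto simp: bij_betw_def intro: inj_on_subset)
  then show ?thesis
    by (metis card_image)
qed

section \<open>The drastic minimum\<close>

lemma drastic_min_eq_cases:
  "a \<le> 1 \<Longrightarrow> b \<le> 1 \<Longrightarrow> drastic_min a b = (if b = 1 then a else if a = 1 then b else 0)"
  by (auto simp: drastic_min_def max_def min_def)

lemma drastic_min_closed: "a \<in> {0..1} \<Longrightarrow> b \<in> {0..1} \<Longrightarrow> drastic_min a b \<in> {0..1}"
  by (auto simp: drastic_min_def max_def min_def)

definition drastic_min_terms ::
  "(nat \<Rightarrow> real) \<Rightarrow> (nat \<Rightarrow> real) \<Rightarrow> (nat \<Rightarrow> nat) \<Rightarrow> nat set \<Rightarrow> real multiset" where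
  "drastic_min_terms x y \<sigma> I = {#drastic_min (x (\<sigma> i)) (y i). i \<in># mset_set I#}"

lemma drastic_min_terms_closed:
  assumes "finite I" "\<sigma> ` I \<subseteq> I" "x ` I \<subseteq> {0..1}" "y ` I \<subseteq> {0..1}"
  shows "set_mset (drastic_min_terms x y \<sigma> I) \<subseteq> {0..1}"
proof
  fix t assume "t \<in># drastic_min_terms x y \<sigma> I"
  then obtain i where "i \<in> I" "t = drastic_min (x (\<sigma> i)) (y i)"
    using assms(1) by (auto simp: drastic_min_terms_def)
  then show "t \<in> {0..1}"
    using assms drastic_min_closed[of "x (\<sigma> i)" "y i"] by (auto simp: image_subset_iff)
qed

lemma one_in_drastic_min_terms:
  "finite I \<Longrightarrow> i \<in> I \<Longrightarrow> x (\<sigma> i) = 1 \<Longrightarrow> y i = 1 \<Longrightarrow> 1 \<in># drastic_min_terms x y \<sigma> I"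
  by (force simp: drastic_min_terms_def drastic_min_def)

lemma drastic_min_terms_split:
  assumes "finite I" "bij_betw \<sigma> I I" "x ` I \<subseteq> {0..1}" "y ` I \<subseteq> {0..1}"
    and no_one: "\<forall>i\<in>I. y i = 1 \<longrightarrow> x (\<sigma> i) \<noteq> 1"
  shows "drastic_min_terms x y \<sigma> I =
    {#x j. j \<in># mset_set (\<sigma> ` {i \<in> I. y i = 1})#} + {#y i. i \<in># mset_set {i \<in> I. x (\<sigma> i) = 1}#}
    + replicate_mset (card I - card {i \<in> I. y i = 1} - card {i \<in> I. x i = 1}) 0"
proof -
  define B C R where "B = {i \<in> I. y i = 1}" and "C = {i \<in> I. x (\<sigma> i) = 1}" and "R = I - B - C"
  have fin: "finite B" "finite C" "finite R"
    using assms(1) by (simp_all add: B_def C_def R_def)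
  have BC: "B \<inter> C = {}"
    using no_one by (auto simp: B_def C_def)
  have "I = B \<union> C \<union> R"
    by (auto simp: B_def C_def R_def)
  moreover have "mset_set (B \<union> C \<union> R) = mset_set B + mset_set C + mset_set R"
    using fin BC by (subst mset_set_Union; auto simp: R_def mset_set_Union)
  ultimately have I: "mset_set I = mset_set B + mset_set C + mset_set R"
    by simp
  have \<sigma>: "\<sigma> i \<in> I" if "i \<in> I" for i
    using assms(2) that by (meson bij_betw_apply)
  have "{#drastic_min (x (\<sigma> i)) (y i). i \<in># mset_set B#} = {#x (\<sigma> i). i \<in># mset_set B#}"
    using fin assms(3,4) \<sigma> by (intro image_mset_cong) (auto simp: B_def drastic_min_eq_cases image_subset_iff)
  also have "\<dots> = {#x j. j \<in># mset_set (\<sigma> ` B)#}"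
    using assms(2) by (intro image_mset_mset_set_reindex) (auto simp: bij_betw_def B_def intro: inj_on_subset)
  finally have termsB:
    "{#drastic_min (x (\<sigma> i)) (y i). i \<in># mset_set B#} = {#x j. j \<in># mset_set (\<sigma> ` B)#}" .
  have termsC: "{#drastic_min (x (\<sigma> i)) (y i). i \<in># mset_set C#} = {#y i. i \<in># mset_set C#}"
    using fin assms(3,4) \<sigma> by (intro image_mset_cong) (auto simp: C_def drastic_min_eq_cases image_subset_iff)
  have "{#drastic_min (x (\<sigma> i)) (y i). i \<in># mset_set R#} = {#0. i \<in># mset_set R#}"
    using fin assms(3,4) \<sigma>
    by (intro image_mset_cong) (auto simp: R_def B_def C_def drastic_min_eq_cases image_subset_iff)
  then have termsR: "{#drastic_min (x (\<sigma> i)) (y i). i \<in># mset_set R#} = replicate_mset (card R) 0"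
    by (simp add: image_mset_const_eq)
  have "R = I - (B \<union> C)" "B \<union> C \<subseteq> I"
    by (auto simp: R_def B_def C_def)
  then have "card R = card I - card B - card C"
    using fin BC by (simp add: card_Diff_subset card_Un_disjoint)
  moreover have "card C = card {i \<in> I. x i = 1}"
    unfolding C_def by (rule card_bij_betw_preimage[OF assms(2)])
  ultimately show ?thesis
    unfolding drastic_min_terms_def I image_mset_union termsB termsC termsR by (simp add: B_def C_def)
qed

lemma drastic_min_terms_rel_mset:
  assumes "finite I" "bij_betw \<sigma> I I" "bij_betw \<tau> I I" "x ` I \<subseteq> {0..1}" "y ` I \<subseteq> {0..1}"
    and "\<forall>i\<in>I. y i = 1 \<longrightarrow> x (\<sigma> i) \<noteq> 1" "\<forall>i\<in>I. y i = 1 \<longrightarrow> x (\<tau> i) \<noteq> 1"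
    and "rel_mset (\<le>) {#x j. j \<in># mset_set (\<sigma> ` {i \<in> I. y i = 1})#}
                      {#x j. j \<in># mset_set (\<tau> ` {i \<in> I. y i = 1})#}"
    and "rel_mset (\<le>) {#y i. i \<in># mset_set {i \<in> I. x (\<sigma> i) = 1}#}
                      {#y i. i \<in># mset_set {i \<in> I. x (\<tau> i) = 1}#}"
  shows "rel_mset (\<le>) (drastic_min_terms x y \<sigma> I) (drastic_min_terms x y \<tau> I)"
proof -
  have "rel_mset (\<le>) (replicate_mset k (0::real)) (replicate_mset k 0)" for k
    by (rule multiset.rel_refl_strong) simp
  then show ?thesis
    unfolding drastic_min_terms_split[OF assms(1,2,4,5,6)] drastic_min_terms_split[OF assms(1,3,4,5,7)]
    using assms(8,9) by (intro rel_mset_plus)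
qed

lemma drastic_min_terms_rel_mset_id:
  assumes "bij_betw \<sigma> {1..n} {1..n}"
    and x: "mono_on {1..n} x" "x ` {1..n} \<subseteq> {0..1}"
    and y: "mono_on {1..n} y" "y ` {1..n} \<subseteq> {0..1}"
    and no_top: "\<not> (x n = 1 \<and> y n = 1)"
  shows "rel_mset (\<le>) (drastic_min_terms x y \<sigma> {1..n})
                      (drastic_min_terms x y (\<lambda>i. i) {1..n})"
proof -
  define I where "I = {1..n}"
  have mono: "mono_on I x" "mono_on I y" and range: "x ` I \<subseteq> {0..1}" "y ` I \<subseteq> {0..1}"
    using x y by (simp_all add: I_def)
  note x_up = mono_on_eq_one_upward[OF mono(1) range(1)]
  note y_up = mono_on_eq_one_upward[OF mono(2) range(2)]
  have bij: "bij_betw \<sigma> I I" "bij_betw (\<lambda>i. i) I I"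
    using assms(1) by (simp_all add: I_def bij_betw_def)
  have \<sigma>: "\<sigma> i \<in> I" if "i \<in> I" for i
    using bij(1) that by (meson bij_betw_apply)
  have n: "n \<in> I" "i \<le> n" if "i \<in> I" for i
    using that by (auto simp: I_def)
  have no_one: "x j \<noteq> 1" if "i \<in> I" "y i = 1" "j \<in> I" for i j
    using no_top x_up[OF that(3) n[OF that(3)]] y_up[OF that(1) n[OF that(1)]] that(2) by blast
  have "rel_mset (\<le>) {#x j. j \<in># mset_set (\<sigma> ` {i \<in> I. y i = 1})#}
                     {#x j. j \<in># mset_set {i \<in> I. y i = 1}#}"
  proof (rule rel_mset_image_mset_set_upward_closed[OF _ _ _ _ mono(1)])
    show "card (\<sigma> ` {i \<in> I. y i = 1}) = card {i \<in> I. y i = 1}"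
      using bij(1) by (intro card_image) (auto simp: bij_betw_def intro: inj_on_subset)
  qed (use \<sigma> y_up in \<open>auto simp: I_def\<close>)
  moreover have "rel_mset (\<le>) {#y i. i \<in># mset_set {i \<in> I. x (\<sigma> i) = 1}#}
                              {#y i. i \<in># mset_set {i \<in> I. x i = 1}#}"
  proof (rule rel_mset_image_mset_set_upward_closed[OF _ _ _ _ mono(2)])
    show "card {i \<in> I. x (\<sigma> i) = 1} = card {i \<in> I. x i = 1}"
      using bij(1) by (rule card_bij_betw_preimage)
  qed (use x_up in \<open>auto simp: I_def\<close>)
  ultimately have "rel_mset (\<le>) (drastic_min_terms x y \<sigma> I) (drastic_min_terms x y (\<lambda>i. i) I)"
    using \<sigma> no_one by (intro drastic_min_terms_rel_mset[OF _ bij range]) (auto simp: I_def)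
  then show ?thesis
    by (simp add: I_def)
qed

lemma uninorm_fold_drastic_min_terms_le_id:
  assumes U: "disjunctive_uninorm U" "e \<in> {0..1}"
    and "n \<ge> 1" "bij_betw \<sigma> {1..n} {1..n}"
    and x: "mono_on {1..n} x" "x ` {1..n} \<subseteq> {0..1}"
    and y: "mono_on {1..n} y" "y ` {1..n} \<subseteq> {0..1}"
  shows "uninorm_fold U e (drastic_min_terms x y \<sigma> {1..n})
       \<le> uninorm_fold U e (drastic_min_terms x y (\<lambda>i. i) {1..n})"
proof (cases "x n = 1 \<and> y n = 1")
  case True
  then have "uninorm_fold U e (drastic_min_terms x y (\<lambda>i. i) {1..n}) = 1"
    using assms(3) by (intro uninorm_fold_absorbs_one[OF U] one_in_drastic_min_terms[of _ n]) auto
  then show ?thesis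
    using U uninorm_fold_closed by (simp add: disjunctive_uninorm_def)
next
  case False
  then have "rel_mset (\<le>) (drastic_min_terms x y \<sigma> {1..n})
                          (drastic_min_terms x y (\<lambda>i. i) {1..n})"
    by (rule drastic_min_terms_rel_mset_id[OF assms(4) x y])
  moreover have "set_mset (drastic_min_terms x y \<tau> {1..n}) \<subseteq> {0..1}" if "\<tau> ` {1..n} \<subseteq> {1..n}" for \<tau>
    by (rule drastic_min_terms_closed[OF finite_atLeastAtMost that x(2) y(2)])
  moreover have "\<sigma> ` {1..n} \<subseteq> {1..n}"
    using assms(4) by (simp add: bij_betw_def)
  ultimately show ?thesis
    using U by (intro uninorm_fold_mono) (simp_all add: disjunctive_uninorm_def)
qed

text \<open>If the reversal pairs some \<open>y i = 1\<close> with \<open>x (n + 1 - i) = 1\<close>, the level sets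
  \<open>{y = 1}\<close> and \<open>{x = 1}\<close> have sizes summing to more than \<open>n\<close>, so no permutation can
  keep them apart.\<close>

lemma reversed_one_pair_imp_one_pair:
  fixes x y :: "nat \<Rightarrow> real"
  assumes "bij_betw \<sigma> {1..n} {1..n}"
    and x: "mono_on {1..n} x" "x ` {1..n} \<subseteq> {0..1}"
    and y: "mono_on {1..n} y" "y ` {1..n} \<subseteq> {0..1}"
    and i: "i \<in> {1..n}" "y i = 1" "x (n + 1 - i) = 1"
  shows "\<exists>j\<in>{1..n}. y j = 1 \<and> x (\<sigma> j) = 1"
proof (rule ccontr)
  assume none: "\<not> ?thesis"
  define A B C where "A = {j \<in> {1..n}. x j = 1}" and "B = {j \<in> {1..n}. y j = 1}"
    and "C = {j \<in> {1..n}. x (\<sigma> j) = 1}"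
  have "{i..n} \<subseteq> B"
  proof
    fix k assume "k \<in> {i..n}"
    then have "k \<in> {1..n}" "i \<le> k"
      using i(1) by auto
    then show "k \<in> B"
      using mono_on_eq_one_upward[OF y i(1) _ _ i(2)] by (simp add: B_def)
  qed
  then have B: "n + 1 - i \<le> card B"
    using card_mono[of B "{i..n}"] by (simp add: B_def)
  have "{n + 1 - i..n} \<subseteq> A"
  proof
    fix k assume "k \<in> {n + 1 - i..n}"
    then have "k \<in> {1..n}" "n + 1 - i \<le> k" "n + 1 - i \<in> {1..n}"
      using i(1) by auto
    then show "k \<in> A"
      using mono_on_eq_one_upward[OF x _ _ _ i(3)] by (simp add: A_def)
  qed
  then have "i \<le> card A"
    using card_mono[of A "{n + 1 - i..n}"] i(1) by (simp add: A_def)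
  moreover have "card C = card A"
    unfolding A_def C_def by (rule card_bij_betw_preimage[OF assms(1)])
  moreover have "card B + card C \<le> n"
  proof -
    have "B \<inter> C = {}" "B \<union> C \<subseteq> {1..n}"
      using none by (auto simp: B_def C_def)
    then show ?thesis
      using card_Un_disjoint[of B C] card_mono[of "{1..n}" "B \<union> C"] by (simp add: B_def C_def)
  qed
  ultimately show False
    using B i(1) by simp
qed

lemma drastic_min_terms_rev_rel_mset:
  assumes "bij_betw \<sigma> {1..n} {1..n}"
    and x: "mono_on {1..n} x" "x ` {1..n} \<subseteq> {0..1}"
    and y: "mono_on {1..n} y" "y ` {1..n} \<subseteq> {0..1}"
    and no_one_pair: "\<not> (\<exists>j\<in>{1..n}. y j = 1 \<and> x (\<sigma> j) = 1)"
  shows "rel_mset (\<le>) (drastic_min_terms x y (\<lambda>i. n + 1 - i) {1..n})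
                      (drastic_min_terms x y \<sigma> {1..n})"
proof -
  define \<rho> where "\<rho> = (\<lambda>i::nat. n + 1 - i)"
  have bij: "bij_betw \<rho> {1..n} {1..n}" "bij_betw \<sigma> {1..n} {1..n}"
    using bij_betw_reverse assms(1) by (simp_all add: \<rho>_def)
  have \<sigma>_I: "\<sigma> i \<in> {1..n}" if "i \<in> {1..n}" for i
    using that bij(2) by (meson bij_betw_apply)
  have no_one: "\<forall>i\<in>{1..n}. y i = 1 \<longrightarrow> x (\<rho> i) \<noteq> 1" "\<forall>i\<in>{1..n}. y i = 1 \<longrightarrow> x (\<sigma> i) \<noteq> 1"
  proof -
    show "\<forall>i\<in>{1..n}. y i = 1 \<longrightarrow> x (\<rho> i) \<noteq> 1"
      using no_one_pair reversed_one_pair_imp_one_pair[OF assms(1) x y] unfolding \<rho>_def by blast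
    show "\<forall>i\<in>{1..n}. y i = 1 \<longrightarrow> x (\<sigma> i) \<noteq> 1"
      using no_one_pair by blast
  qed
  have upward: "i \<in> {j \<in> {1..n}. f j = 1}"
    if "mono_on {1..n} f" "f ` {1..n} \<subseteq> {0..1}" "i \<in> {1..n}" "j \<in> {j \<in> {1..n}. f j = 1}" "j \<le> i"
    for f :: "nat \<Rightarrow> real" and i j
  proof -
    have "j \<in> {1..n}" "f j = 1"
      using that(4) by auto
    then show ?thesis
      using mono_on_eq_one_upward[OF that(1,2) _ that(3,5)] that(3) by blast
  qed
  have level_sets: "{i \<in> {1..n}. y i = 1} \<subseteq> {1..n}" "{i \<in> {1..n}. x i = 1} \<subseteq> {1..n}"
    "\<sigma> ` {i \<in> {1..n}. y i = 1} \<subseteq> {1..n}" "{i \<in> {1..n}. x (\<sigma> i) = 1} \<subseteq> {1..n}"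
    using \<sigma>_I by blast+
  have "card (\<sigma> ` {i \<in> {1..n}. y i = 1}) = card {i \<in> {1..n}. y i = 1}"
    using bij(2) by (intro card_image) (auto simp: bij_betw_def intro: inj_on_subset)
  from rel_mset_image_mset_set_reverse_upward_closed[OF level_sets(1,3) this x(1) upward[OF y]]
  have "rel_mset (\<le>) {#x j. j \<in># mset_set (\<rho> ` {i \<in> {1..n}. y i = 1})#}
                     {#x j. j \<in># mset_set (\<sigma> ` {i \<in> {1..n}. y i = 1})#}"
    unfolding \<rho>_def .
  moreover have "rel_mset (\<le>) {#y j. j \<in># mset_set {i \<in> {1..n}. x (\<rho> i) = 1}#}
                              {#y j. j \<in># mset_set {i \<in> {1..n}. x (\<sigma> i) = 1}#}"
    unfolding \<rho>_def Collect_reverse_eq_image[of n "\<lambda>j. x j = 1"]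
    by (rule rel_mset_image_mset_set_reverse_upward_closed[OF level_sets(2,4)
          card_bij_betw_preimage[OF bij(2)] y(1) upward[OF x]])
  ultimately have "rel_mset (\<le>) (drastic_min_terms x y \<rho> {1..n}) (drastic_min_terms x y \<sigma> {1..n})"
    by (rule drastic_min_terms_rel_mset[OF finite_atLeastAtMost bij x(2) y(2) no_one])
  then show ?thesis
    by (simp add: \<rho>_def)
qed

lemma uninorm_fold_drastic_min_terms_rev_le:
  assumes U: "disjunctive_uninorm U" "e \<in> {0..1}"
    and "bij_betw \<sigma> {1..n} {1..n}"
    and x: "mono_on {1..n} x" "x ` {1..n} \<subseteq> {0..1}"
    and y: "mono_on {1..n} y" "y ` {1..n} \<subseteq> {0..1}"
  shows "uninorm_fold U e (drastic_min_terms x y (\<lambda>i. n + 1 - i) {1..n})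
       \<le> uninorm_fold U e (drastic_min_terms x y \<sigma> {1..n})"
proof (cases "\<exists>j\<in>{1..n}. y j = 1 \<and> x (\<sigma> j) = 1")
  case True
  then obtain j where "j \<in> {1..n}" "y j = 1" "x (\<sigma> j) = 1"
    by blast
  then have "uninorm_fold U e (drastic_min_terms x y \<sigma> {1..n}) = 1"
    by (intro uninorm_fold_absorbs_one[OF U] one_in_drastic_min_terms) auto
  then show ?thesis
    using U uninorm_fold_closed by (simp add: disjunctive_uninorm_def)
next
  case False
  then have "rel_mset (\<le>) (drastic_min_terms x y (\<lambda>i. n + 1 - i) {1..n})
                          (drastic_min_terms x y \<sigma> {1..n})"
    by (rule drastic_min_terms_rev_rel_mset[OF assms(3) x y])
  moreover have "set_mset (drastic_min_terms x y \<tau> {1..n}) \<subseteq> {0..1}" if "\<tau> ` {1..n} \<subseteq> {1..n}" for \<tau>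
    by (rule drastic_min_terms_closed[OF finite_atLeastAtMost that x(2) y(2)])
  moreover have "\<sigma> ` {1..n} \<subseteq> {1..n}" "(\<lambda>i. n + 1 - i) ` {1..n} \<subseteq> {1..n}"
    using assms(3) bij_betw_reverse by (simp_all add: bij_betw_def)
  ultimately show ?thesis
    using U by (intro uninorm_fold_mono) (simp_all add: disjunctive_uninorm_def)
qed

lemma iter_drastic_min_eq_uninorm_fold:
  assumes "uninorm U" "e \<in> {0..1}" "\<forall>a\<in>{0..1}. U e a = a" "n \<ge> 1"
    and "\<sigma> ` {1..n} \<subseteq> {1..n}" "x ` {1..n} \<subseteq> {0..1}" "y ` {1..n} \<subseteq> {0..1}"
  shows "iter U (\<lambda>i. drastic_min (x (\<sigma> i)) (y i)) n
       = uninorm_fold U e (drastic_min_terms x y \<sigma> {1..n})"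
proof -
  have "drastic_min (x (\<sigma> i)) (y i) \<in> {0..1}" if "i \<in> {1..n}" for i
    using assms(5-7) that by (intro drastic_min_closed) (auto simp: image_subset_iff)
  then show ?thesis
    unfolding drastic_min_terms_def by (intro iter_eq_uninorm_fold[OF assms(1-4)]) auto
qed

lemma sorted_pair_iff_mono_on:
  fixes x y :: "nat \<Rightarrow> real"
  shows "(\<forall>i j. 1 \<le> i \<longrightarrow> i \<le> j \<longrightarrow> j \<le> n \<longrightarrow> x i \<le> x j \<and> y i \<le> y j)
    \<longleftrightarrow> mono_on {1..n} x \<and> mono_on {1..n} y"
  by (auto simp: mono_on_def monotone_on_def)

lemma unit_interval_pair_iff:
  "(\<forall>i\<in>{1..n}. 0 \<le> x i \<and> x i \<le> 1 \<and> 0 \<le> y i \<and> y i \<le> 1)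
    \<longleftrightarrow> x ` {1..n} \<subseteq> {0..1} \<and> y ` {1..n} \<subseteq> {0..1::real}"
  by auto

lemma rearrangement_ineq_drastic_min:
  assumes "disjunctive_uninorm U"
  shows "rearrangement_ineq drastic_min U"
  unfolding rearrangement_ineq_def sorted_pair_iff_mono_on unit_interval_pair_iff
proof (intro allI impI, elim conjE)
  fix n :: nat and x y :: "nat \<Rightarrow> real" and \<sigma>
  assume n: "n \<ge> 1" and "\<sigma> permutes {1..n}"
    and x: "mono_on {1..n} x" "x ` {1..n} \<subseteq> {0..1}" and y: "mono_on {1..n} y" "y ` {1..n} \<subseteq> {0..1}"
  have U: "uninorm U"
    using assms by (simp add: disjunctive_uninorm_def)
  obtain e where e: "e \<in> {0..1}" "\<forall>a\<in>{0..1}. U e a = a"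
    using U unfolding uninorm_def by blast
  have bij: "bij_betw \<sigma> {1..n} {1..n}"
    using \<open>\<sigma> permutes {1..n}\<close> by (rule permutes_imp_bij)
  note iter_eq = iter_drastic_min_eq_uninorm_fold[OF U e n _ x(2) y(2)]
  have "iter U (\<lambda>i. drastic_min (x (n + 1 - i)) (y i)) n
      = uninorm_fold U e (drastic_min_terms x y (\<lambda>i. n + 1 - i) {1..n})"
    by (rule iter_eq) auto
  moreover have "iter U (\<lambda>i. drastic_min (x (\<sigma> i)) (y i)) n
      = uninorm_fold U e (drastic_min_terms x y \<sigma> {1..n})"
    using bij by (intro iter_eq) (simp add: bij_betw_def)
  moreover have "iter U (\<lambda>i. drastic_min (x i) (y i)) n
      = uninorm_fold U e (drastic_min_terms x y (\<lambda>i. i) {1..n})"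
    using iter_eq[of "\<lambda>i. i"] by simp
  ultimately show "iter U (\<lambda>i. drastic_min (x (n + 1 - i)) (y i)) n
      \<le> iter U (\<lambda>i. drastic_min (x (\<sigma> i)) (y i)) n \<and>
    iter U (\<lambda>i. drastic_min (x (\<sigma> i)) (y i)) n \<le> iter U (\<lambda>i. drastic_min (x i) (y i)) n"
    using uninorm_fold_drastic_min_terms_rev_le[OF assms e(1) bij x y]
      uninorm_fold_drastic_min_terms_le_id[OF assms e(1) n bij x y] by simp
qed

section \<open>Duality\<close>

definition dual_uninorm :: "(real \<Rightarrow> real \<Rightarrow> real) \<Rightarrow> real \<Rightarrow> real \<Rightarrow> real" where
  "dual_uninorm U a b = 1 - U (1 - a) (1 - b)"

lemma uninorm_dual_uninorm:
  assumes "uninorm U"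
  shows "uninorm (dual_uninorm U)"
proof -
  obtain e where "e \<in> {0..1}" "\<forall>a\<in>{0..1}. U e a = a"
    using assms unfolding uninorm_def by blast
  then have "\<exists>e\<in>{0..1}. \<forall>a\<in>{0..1}. dual_uninorm U e a = a"
    by (intro bexI[of _ "1 - e"]) (auto simp: dual_uninorm_def)
  moreover have "1 - a \<in> {0..1}" if "a \<in> {0..1}" for a :: real
    using that by auto
  ultimately show ?thesis
    using assms uninorm_closed[OF assms] uninorm_commute[OF assms] uninorm_assoc[OF assms]
    unfolding uninorm_def dual_uninorm_def by auto
qed

lemma disjunctive_dual_uninorm:
  assumes "conjunctive_uninorm U"
  shows "disjunctive_uninorm (dual_uninorm U)"
proof -
  have U: "uninorm U" "U 0 1 = 0"
    using assms by (simp_all add: conjunctive_uninorm_def)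
  have "U 1 0 = U 0 1"
    by (rule uninorm_commute[OF U(1)]) auto
  then show ?thesis
    using U uninorm_dual_uninorm[OF U(1)] by (simp add: disjunctive_uninorm_def dual_uninorm_def)
qed

lemma iter_dual_uninorm: "iter U f n = 1 - iter (dual_uninorm U) (\<lambda>i. 1 - f i) n"
  by (induction U f n rule: iter.induct) (simp_all add: dual_uninorm_def)

lemma one_minus_drastic_max: "1 - drastic_max a b = drastic_min (1 - a) (1 - b)"
  by (auto simp: drastic_max_def drastic_min_def max_def min_def)

lemma drastic_max_closed: "a \<in> {0..1} \<Longrightarrow> b \<in> {0..1} \<Longrightarrow> drastic_max a b \<in> {0..1}"
  by (auto simp: drastic_max_def max_def min_def)

lemma iter_drastic_max_eq_dual:
  assumes "uninorm U" "n \<ge> 1" "\<tau> ` {1..n} \<subseteq> {1..n}" "x ` {1..n} \<subseteq> {0..1}" "y ` {1..n} \<subseteq> {0..1}"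
  shows "iter U (\<lambda>i. drastic_max (x (\<tau> i)) (y i)) n
       = 1 - iter (dual_uninorm U) (\<lambda>k. drastic_min (1 - x (\<tau> (n + 1 - k))) (1 - y (n + 1 - k))) n"
proof -
  have "drastic_max (x (\<tau> i)) (y i) \<in> {0..1}" if "i \<in> {1..n}" for i
    using assms(3-5) that by (intro drastic_max_closed) (auto simp: image_subset_iff)
  then have closed: "(\<lambda>i. drastic_max (x (\<tau> i)) (y i)) ` {1..n} \<subseteq> {0..1}"
    by auto
  have "iter U (\<lambda>i. drastic_max (x (\<tau> i)) (y i)) n
      = iter U (\<lambda>k. drastic_max (x (\<tau> (n + 1 - k))) (y (n + 1 - k))) n"
    using iter_permute[OF assms(1,2) bij_betw_reverse closed] by simp
  also have "\<dots> = 1 - iter (dual_uninorm U) (\<lambda>k. 1 - drastic_max (x (\<tau> (n + 1 - k))) (y (n + 1 - k))) n"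
    by (rule iter_dual_uninorm)
  finally show ?thesis
    by (simp add: one_minus_drastic_max)
qed

lemma mono_on_reverse_complement:
  fixes x :: "nat \<Rightarrow> real"
  assumes "mono_on {1..n} x"
  shows "mono_on {1..n} (\<lambda>k. 1 - x (n + 1 - k))"
proof (rule mono_onI)
  fix i j assume "i \<in> {1..n}" "j \<in> {1..n}" "i \<le> j"
  then have "x (n + 1 - j) \<le> x (n + 1 - i)"
    by (intro mono_onD[OF assms]) auto
  then show "1 - x (n + 1 - i) \<le> 1 - x (n + 1 - j)"
    by simp
qed

lemma reverse_complement_closed:
  fixes x :: "nat \<Rightarrow> real"
  assumes "x ` {1..n} \<subseteq> {0..1}"
  shows "(\<lambda>k. 1 - x (n + 1 - k)) ` {1..n} \<subseteq> {0..1}"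
proof (rule image_subsetI)
  fix k assume "k \<in> {1..n}"
  then have "n + 1 - k \<in> {1..n}"
    by auto
  then have "x (n + 1 - k) \<in> {0..1}"
    using assms by blast
  then show "1 - x (n + 1 - k) \<in> {0..1}"
    by auto
qed

lemma map_permutation_reverse:
  fixes n :: nat
  assumes "\<sigma> permutes {1..n}" "k \<in> {1..n}"
  shows "n + 1 - map_permutation {1..n} (\<lambda>i. n + 1 - i) \<sigma> k = \<sigma> (n + 1 - k)"
proof -
  have k: "n + 1 - k \<in> {1..n}" "n + 1 - (n + 1 - k) = k"
    using assms(2) by auto
  have "map_permutation {1..n} (\<lambda>i. n + 1 - i) \<sigma> k = n + 1 - \<sigma> (n + 1 - k)"
    using map_permutation_apply[OF bij_betw_imp_inj_on[OF bij_betw_reverse] k(1), of \<sigma>] k(2) by simp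
  moreover have "\<sigma> (n + 1 - k) \<in> {1..n}"
    using k(1) by (rule permutes_in_image[OF assms(1), THEN iffD2])
  ultimately show ?thesis
    by simp
qed

text \<open>Reversing and complementing the data, and conjugating the permutation by the reversal,
  turns the dual inequality for \<open>U\<close> into the rearrangement inequality for its dual.\<close>

lemma dual_rearrangement_ineq_if_rearrangement_ineq_dual:
  assumes U: "uninorm U" and dual: "rearrangement_ineq drastic_min (dual_uninorm U)"
  shows "dual_rearrangement_ineq U drastic_max"
  unfolding dual_rearrangement_ineq_def sorted_pair_iff_mono_on unit_interval_pair_iff
proof (intro allI impI, elim conjE)
  fix n :: nat and x y :: "nat \<Rightarrow> real" and \<sigma>
  assume n: "n \<ge> 1" and \<sigma>: "\<sigma> permutes {1..n}"
    and x: "mono_on {1..n} x" "x ` {1..n} \<subseteq> {0..1}" and y: "mono_on {1..n} y" "y ` {1..n} \<subseteq> {0..1}"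
  define x' y' \<sigma>' where "x' = (\<lambda>k. 1 - x (n + 1 - k))" and "y' = (\<lambda>k. 1 - y (n + 1 - k))"
    and "\<sigma>' = map_permutation {1..n} (\<lambda>i. n + 1 - i) \<sigma>"
  have "\<sigma>' permutes {1..n}"
    unfolding \<sigma>'_def by (rule map_permutation_permutes[OF bij_betw_reverse \<sigma>])
  moreover have "mono_on {1..n} x'" "mono_on {1..n} y'" "x' ` {1..n} \<subseteq> {0..1}" "y' ` {1..n} \<subseteq> {0..1}"
    unfolding x'_def y'_def
    by (rule mono_on_reverse_complement[OF x(1)] mono_on_reverse_complement[OF y(1)]
        reverse_complement_closed[OF x(2)] reverse_complement_closed[OF y(2)])+
  ultimately have dual_ineq:
    "iter (dual_uninorm U) (\<lambda>i. drastic_min (x' (n + 1 - i)) (y' i)) n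
       \<le> iter (dual_uninorm U) (\<lambda>i. drastic_min (x' (\<sigma>' i)) (y' i)) n \<and>
     iter (dual_uninorm U) (\<lambda>i. drastic_min (x' (\<sigma>' i)) (y' i)) n
       \<le> iter (dual_uninorm U) (\<lambda>i. drastic_min (x' i) (y' i)) n"
    using dual[unfolded rearrangement_ineq_def sorted_pair_iff_mono_on unit_interval_pair_iff, rule_format, OF n]
    by blast
  have eq: "iter U (\<lambda>i. drastic_max (x (\<tau> i)) (y i)) n
      = 1 - iter (dual_uninorm U) (\<lambda>k. drastic_min (x' (\<tau>' k)) (y' k)) n"
    if "\<tau> ` {1..n} \<subseteq> {1..n}" "\<And>k. k \<in> {1..n} \<Longrightarrow> n + 1 - \<tau>' k = \<tau> (n + 1 - k)" for \<tau> \<tau>'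
  proof -
    have "iter (dual_uninorm U) (\<lambda>k. drastic_min (1 - x (\<tau> (n + 1 - k))) (1 - y (n + 1 - k))) n
        = iter (dual_uninorm U) (\<lambda>k. drastic_min (x' (\<tau>' k)) (y' k)) n"
      using that(2) by (intro iter_cong[OF n]) (simp add: x'_def y'_def)
    then show ?thesis
      using iter_drastic_max_eq_dual[OF U n that(1) x(2) y(2)] by simp
  qed
  have "iter U (\<lambda>i. drastic_max (x (n + 1 - i)) (y i)) n
      = 1 - iter (dual_uninorm U) (\<lambda>k. drastic_min (x' (n + 1 - k)) (y' k)) n"
    by (rule eq[of "\<lambda>i. n + 1 - i" "\<lambda>i. n + 1 - i"]) auto
  moreover have "iter U (\<lambda>i. drastic_max (x (\<sigma> i)) (y i)) n
      = 1 - iter (dual_uninorm U) (\<lambda>k. drastic_min (x' (\<sigma>' k)) (y' k)) n"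
    unfolding \<sigma>'_def by (rule eq) (use map_permutation_reverse[OF \<sigma>] permutes_in_image[OF \<sigma>] in auto)
  moreover have "iter U (\<lambda>i. drastic_max (x i) (y i)) n
      = 1 - iter (dual_uninorm U) (\<lambda>k. drastic_min (x' k) (y' k)) n"
    by (rule eq[of "\<lambda>i. i" "\<lambda>i. i"]) auto
  ultimately show "iter U (\<lambda>i. drastic_max (x (\<sigma> i)) (y i)) n
      \<le> iter U (\<lambda>i. drastic_max (x (n + 1 - i)) (y i)) n \<and>
    iter U (\<lambda>i. drastic_max (x i) (y i)) n \<le> iter U (\<lambda>i. drastic_max (x (\<sigma> i)) (y i)) n"
    using dual_ineq by simp
qed

theorem theorem11:
  fixes U :: "real \<Rightarrow> real \<Rightarrow> real"
  shows "(disjunctive_uninorm U \<longrightarrow> rearrangement_ineq drastic_min U) \<and>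
         (conjunctive_uninorm U \<longrightarrow> dual_rearrangement_ineq U drastic_max)"
proof (intro conjI impI)
  show "rearrangement_ineq drastic_min U" if "disjunctive_uninorm U"
    using that by (rule rearrangement_ineq_drastic_min)
  show "dual_rearrangement_ineq U drastic_max" if "conjunctive_uninorm U"
  proof (rule dual_rearrangement_ineq_if_rearrangement_ineq_dual)
    show "uninorm U"
      using that by (simp add: conjunctive_uninorm_def)
    show "rearrangement_ineq drastic_min (dual_uninorm U)"
      using disjunctive_dual_uninorm[OF that] by (rule rearrangement_ineq_drastic_min)
  qed
qed

end
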